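(* For every integer $k\ge 0$, $$\lim_{N\to\infty}\Pr[\mathcal{L}_N=k]=\frac{e^{-1}}{k!},$$ i.e. $\mathcal{L}_N$ converges in distribution to a Poisson random variable with mean $1$.
   Context: A random recursive hypergraph (RRH) is the random hypergraph process defined as follows. At size $N=1$ it has vertex set $\{v_1\}$ and edge set $\{\{v_1\}\}$. Given the hypergraph of size $N$ (vertices $v_1,\dots,v_N$, exactly $N$ edges), one chooses an existing edge $e$ uniformly at random, independently of the past, and adds a new vertex $v_{N+1}$ together with the new edge $e\cup\{v_{N+1}\}$. A leaf is a vertex $v\neq v_1$ such that the only edge containing $v$ is $\{v_1,v\}$. $\mathcal{L}_N$ denotes the number of leaves in the RRH of size $N$. *)

theory Defs
  imports "HOL-Probability.Probability"
begin

text \<open>Vertex v_i is represented by the natural number i. The hypergraph of size N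
is represented by its list of edges (edge j+1 is the j-th list entry); the
vertex set is {1..N}.\<close>

text \<open>rrh_aux n is the random edge list of the RRH of size n+1.\<close>
fun rrh_aux :: "nat \<Rightarrow> nat set list pmf" where
  "rrh_aux 0 = return_pmf [{1}]"
| "rrh_aux (Suc n) =
     bind_pmf (rrh_aux n) (\<lambda>es.
       map_pmf (\<lambda>i. es @ [insert (n + 2) (es ! i)]) (pmf_of_set {0..<length es}))"

definition RRH :: "nat \<Rightarrow> nat set list pmf" where
  "RRH N = rrh_aux (N - 1)"

definition leaves :: "nat \<Rightarrow> nat set list \<Rightarrow> nat" where
  "leaves N es = card {v. 2 \<le> v \<and> v \<le> N \<and> {e \<in> set es. v \<in> e} = {{1, v}}}"

end

theory Submission
  imports Defs
begin

text \<open>Attaching the new vertex to the root edge {v1} creates a leaf, attaching it to the edge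
{v1, v} of a leaf v destroys that leaf, and every other choice leaves the set of leaves unchanged.
Hence the number of leaves evolves as a Markov chain of its own, and its distribution satisfies a
three-term recurrence. The recurrence is solved by
  P(L_N = k) = (1/k!) * (\<Sum>i < N - k. (-1)^i / i!),
the probability that a uniform random permutation of N points has exactly k fixed points, and the
partial sums tend to e^(-1).\<close>

text \<open>For j \<ge> 1, list entry j is the edge created together with vertex j + 1.\<close>

definition rrh_shape :: "nat \<Rightarrow> nat set list \<Rightarrow> bool" where
  "rrh_shape n es \<longleftrightarrow> length es = Suc n \<and> es ! 0 = {1} \<and>
     (\<forall>j\<in>{1..n}. Suc j \<in> es ! j \<and> es ! j \<subseteq> {1..Suc j})"

lemma rrh_shape_edge_subset:
  assumes "rrh_shape n es" "e \<in> set es"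
  shows "e \<subseteq> {1..Suc n}"
proof -
  obtain j where "j \<le> n" "e = es ! j"
    using assms by (metis in_set_conv_nth less_Suc_eq_le rrh_shape_def)
  with assms(1) show ?thesis
    by (cases "j = 0") (fastforce simp: rrh_shape_def)+
qed

lemma rrh_shape_attach:
  assumes "rrh_shape n es" "i \<le> n"
  shows "rrh_shape (Suc n) (es @ [insert (Suc (Suc n)) (es ! i)])"
proof -
  have "es ! i \<subseteq> {1..Suc n}"
    using assms by (intro rrh_shape_edge_subset) (auto simp: rrh_shape_def)
  with assms show ?thesis
    by (auto simp: rrh_shape_def nth_append le_Suc_eq)
qed

lemma rrh_shape_rrh_aux: "es \<in> set_pmf (rrh_aux n) \<Longrightarrow> rrh_shape n es"
proof (induction n arbitrary: es)
  case 0
  then show ?case by (simp add: rrh_shape_def)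
next
  case (Suc n)
  then obtain es0 i where es0: "es0 \<in> set_pmf (rrh_aux n)"
      and i: "i \<in> set_pmf (pmf_of_set {0..<length es0})"
      and es: "es = es0 @ [insert (Suc (Suc n)) (es0 ! i)]"
    by auto
  have "rrh_shape n es0"
    using es0 by (rule Suc.IH)
  moreover from this have "i \<le> n"
    using i by (simp add: rrh_shape_def)
  ultimately show ?case
    unfolding es by (rule rrh_shape_attach)
qed

definition leaf_set :: "nat \<Rightarrow> nat set list \<Rightarrow> nat set" where
  "leaf_set N es = {v. 2 \<le> v \<and> v \<le> N \<and> {e \<in> set es. v \<in> e} = {{1, v}}}"

lemma leaves_eq_card_leaf_set: "leaves N es = card (leaf_set N es)"
  by (simp add: leaves_def leaf_set_def)

lemma leaf_set_subset: "leaf_set N es \<subseteq> {2..N}"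
  unfolding leaf_set_def by (intro subsetI) (simp only: mem_Collect_eq atLeastAtMost_iff)

lemma leaf_set_append_fresh:
  assumes "\<forall>e' \<in> set es. Suc N \<notin> e'" "Suc N \<notin> e" "1 \<le> N"
  shows "leaf_set (Suc N) (es @ [insert (Suc N) e]) =
           (leaf_set N es - e) \<union> (if e = {1} then {Suc N} else {})"
proof (rule set_eqI)
  fix v
  show "v \<in> leaf_set (Suc N) (es @ [insert (Suc N) e]) \<longleftrightarrow>
          v \<in> (leaf_set N es - e) \<union> (if e = {1} then {Suc N} else {})"
  proof (cases "v = Suc N")
    case True
    with assms have "{e' \<in> set (es @ [insert (Suc N) e]). v \<in> e'} = {insert (Suc N) e}"
      by auto
    moreover have "insert (Suc N) e = {1, Suc N} \<longleftrightarrow> e = {1}"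
    proof
      assume "insert (Suc N) e = {1, Suc N}"
      then have "e = {1, Suc N} - {Suc N}"
        using assms(2) by (metis Diff_insert_absorb)
      then show "e = {1}"
        using assms(3) by auto
    qed (simp add: insert_commute)
    ultimately show ?thesis
      using True assms(3) by (simp add: leaf_set_def)
  next
    case False
    show ?thesis
    proof (cases "v \<in> e")
      case True
      have "v \<notin> leaf_set (Suc N) (es @ [insert (Suc N) e])"
      proof
        assume "v \<in> leaf_set (Suc N) (es @ [insert (Suc N) e])"
        then have "{e' \<in> set (es @ [insert (Suc N) e]). v \<in> e'} = {{1, v}}"
          by (simp add: leaf_set_def)
        moreover have "insert (Suc N) e \<in> {e' \<in> set (es @ [insert (Suc N) e]). v \<in> e'}"
          using True by simp
        ultimately have "Suc N \<in> {1, v}"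
          by (metis insertI1 singletonD)
        then show False
          using False assms(3) by simp
      qed
      then show ?thesis
        using True False by simp
    next
      case v_notin: False
      then have "{e' \<in> set (es @ [insert (Suc N) e]). v \<in> e'} = {e' \<in> set es. v \<in> e'}"
        using False by auto
      then show ?thesis
        using False v_notin by (simp add: leaf_set_def le_Suc_eq)
    qed
  qed
qed

lemma leaf_set_minus_edge:
  assumes "rrh_shape n es" "i \<in> {1..n}"
  shows "leaf_set (Suc n) es - es ! i = leaf_set (Suc n) es - {Suc i}"
proof -
  have "Suc i \<in> es ! i" and edge: "es ! i \<in> set es"
    using assms by (auto simp: rrh_shape_def)
  moreover have "v = Suc i" if "v \<in> leaf_set (Suc n) es" "v \<in> es ! i" for v
  proof -
    \<comment> \<open>the only edge containing a leaf v is {1, v}, and edge i contains i + 1 \<noteq> 1\<close>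
    have "{e \<in> set es. v \<in> e} = {{1, v}}"
      using that(1) by (simp add: leaf_set_def)
    then have "es ! i = {1, v}"
      using that(2) edge by (metis (no_types, lifting) mem_Collect_eq singletonD)
    with \<open>Suc i \<in> es ! i\<close> assms(2) show ?thesis by auto
  qed
  ultimately show ?thesis by blast
qed

lemma leaves_attach:
  assumes "rrh_shape n es" "i \<le> n"
  shows "leaves (Suc (Suc n)) (es @ [insert (Suc (Suc n)) (es ! i)]) =
           (if i = 0 then Suc (leaves (Suc n) es)
            else if Suc i \<in> leaf_set (Suc n) es then leaves (Suc n) es - 1
            else leaves (Suc n) es)"
proof -
  have fresh: "\<forall>e \<in> set es. Suc (Suc n) \<notin> e"
    using rrh_shape_edge_subset[OF assms(1)] by fastforce
  have edge: "es ! i \<in> set es"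
    using assms by (auto simp: rrh_shape_def)
  have fin: "finite (leaf_set (Suc n) es)"
    using leaf_set_subset finite_subset by blast
  show ?thesis
  proof (cases "i = 0")
    case True
    have "es ! i = {1}"
      using True assms(1) by (simp add: rrh_shape_def)
    moreover have "Suc (Suc n) \<notin> leaf_set (Suc n) es" "1 \<notin> leaf_set (Suc n) es"
      using leaf_set_subset[of "Suc n" es] by auto
    ultimately show ?thesis
      using True fin fresh leaf_set_append_fresh[of es "Suc n" "es ! i"]
      by (simp add: leaves_eq_card_leaf_set)
  next
    case False
    with assms have "Suc i \<in> es ! i"
      by (auto simp: rrh_shape_def)
    then have "es ! i \<noteq> {1}"
      using False by (metis One_nat_def Suc_inject singletonD)
    then show ?thesis
      using False assms fin fresh edge leaf_set_append_fresh[of es "Suc n" "es ! i"]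
        leaf_set_minus_edge[of n es i]
      by (simp add: leaves_eq_card_leaf_set)
  qed
qed

lemma card_leaf_positions:
  "card {i \<in> {1..n}. Suc i \<in> leaf_set (Suc n) es} = leaves (Suc n) es"
proof -
  have "{i \<in> {1..n}. Suc i \<in> leaf_set (Suc n) es} = (\<lambda>v. v - 1) ` leaf_set (Suc n) es"
    using leaf_set_subset[of "Suc n" es] by (force simp: image_iff)
  moreover have "inj_on (\<lambda>v. v - 1) (leaf_set (Suc n) es)"
    using leaf_set_subset[of "Suc n" es] by (intro inj_onI) fastforce
  ultimately show ?thesis
    by (simp add: card_image leaves_eq_card_leaf_set)
qed

text \<open>Among the n + 1 possible attachment edges of a hypergraph with l leaves, one creates a leaf,
  l destroy one and the remaining n - l keep the count.\<close>

definition leaf_step_count :: "nat \<Rightarrow> nat \<Rightarrow> nat \<Rightarrow> nat" where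
  "leaf_step_count n l k = of_bool (k = Suc l) + l * of_bool (Suc k = l) + (n - l) * of_bool (k = l)"

lemma card_attach_choices:
  assumes "rrh_shape n es"
  shows "card {i \<in> {0..n}. leaves (Suc (Suc n)) (es @ [insert (Suc (Suc n)) (es ! i)]) = k} =
           leaf_step_count n (leaves (Suc n) es) k"
proof -
  define l where "l = leaves (Suc n) es"
  define A where "A = {i \<in> {1..n}. Suc i \<in> leaf_set (Suc n) es}"
  let ?new = "\<lambda>i. leaves (Suc (Suc n)) (es @ [insert (Suc (Suc n)) (es ! i)])"
  have card_A: "card A = l"
    unfolding A_def l_def by (rule card_leaf_positions)
  have "A \<subseteq> {1..n}"
    by (auto simp: A_def)
  then have card_B: "card ({1..n} - A) = n - l"
    by (simp add: card_Diff_subset finite_subset card_A)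
  have new_0: "?new 0 = Suc l"
    using leaves_attach[OF assms, of 0] by (simp add: l_def)
  have new_i: "?new i = (if i \<in> A then l - 1 else l)" if "i \<in> {1..n}" for i
    using leaves_attach[OF assms, of i] that by (simp add: A_def l_def)
  have "card {i \<in> {0..n}. ?new i = k} = (\<Sum>i \<in> {0..n}. of_bool (?new i = k))"
    by (simp add: Int_def)
  also have "\<dots> = of_bool (Suc l = k) + (\<Sum>i \<in> {1..n}. of_bool (?new i = k))"
    by (simp add: sum.atLeast_Suc_atMost new_0 del: sum_of_bool_eq)
  also have "(\<Sum>i \<in> {1..n}. of_bool (?new i = k)) =
      (\<Sum>i \<in> {1..n}. if i \<in> A then of_bool (l - 1 = k) else of_bool (l = k))"
    by (rule sum.cong) (simp_all add: new_i del: sum_of_bool_eq)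
  also have "\<dots> = card A * of_bool (l - 1 = k) + card ({1..n} - A) * of_bool (l = k)"
    using \<open>A \<subseteq> {1..n}\<close> by (simp add: sum.If_cases Diff_eq Int_absorb1 del: sum_of_bool_eq)
  also have "of_bool (Suc l = k) + \<dots> = leaf_step_count n l k"
    unfolding card_A card_B leaf_step_count_def by (cases l) auto
  finally show ?thesis
    unfolding l_def .
qed

definition leaf_count :: "nat \<Rightarrow> nat pmf" where
  "leaf_count n = map_pmf (leaves (Suc n)) (rrh_aux n)"

lemma pmf_leaf_count_Suc_integral:
  "pmf (leaf_count (Suc n)) k =
     (\<integral>l. real (leaf_step_count n l k) / real (Suc n) \<partial>measure_pmf (leaf_count n))"
proof -
  let ?new = "\<lambda>es i. leaves (Suc (Suc n)) (es @ [insert (Suc (Suc n)) (es ! i)])"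
  have "pmf (leaf_count (Suc n)) k =
      (\<integral>es. pmf (map_pmf (?new es) (pmf_of_set {0..<length es})) k \<partial>measure_pmf (rrh_aux n))"
    by (simp add: leaf_count_def map_bind_pmf map_pmf_comp pmf_bind)
  also have "\<dots> = (\<integral>es. real (leaf_step_count n (leaves (Suc n) es) k) / real (Suc n)
                     \<partial>measure_pmf (rrh_aux n))"
  proof (intro integral_cong_AE AE_pmfI)
    fix es
    assume "es \<in> set_pmf (rrh_aux n)"
    then have shape: "rrh_shape n es"
      by (rule rrh_shape_rrh_aux)
    then have "{0..<length es} = {0..n}"
      by (auto simp: rrh_shape_def)
    moreover have "{0..n} \<inter> ?new es -` {k} = {i \<in> {0..n}. ?new es i = k}"
      by auto
    ultimately show "pmf (map_pmf (?new es) (pmf_of_set {0..<length es})) k =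
        real (leaf_step_count n (leaves (Suc n) es) k) / real (Suc n)"
      using card_attach_choices[OF shape, of k] by (simp add: pmf_map measure_pmf_of_set)
  qed simp_all
  also have "\<dots> = (\<integral>l. real (leaf_step_count n l k) / real (Suc n) \<partial>measure_pmf (leaf_count n))"
    by (simp add: leaf_count_def)
  finally show ?thesis .
qed

lemma pmf_leaf_count_Suc:
  "pmf (leaf_count (Suc n)) k =
     ((if k = 0 then 0 else pmf (leaf_count n) (k - 1)) + real (Suc k) * pmf (leaf_count n) (Suc k)
      + real (n - k) * pmf (leaf_count n) k) / real (Suc n)"
proof (cases k)
  case 0
  have "pmf (leaf_count (Suc n)) k =
      (\<Sum>l\<in>{0, 1}. real (leaf_step_count n l k) / real (Suc n) * pmf (leaf_count n) l)"
    unfolding pmf_leaf_count_Suc_integral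
    by (rule integral_measure_pmf_real) (auto simp: leaf_step_count_def 0)
  then show ?thesis
    by (simp add: leaf_step_count_def 0 add_divide_distrib algebra_simps)
next
  case (Suc k')
  have "pmf (leaf_count (Suc n)) k =
      (\<Sum>l\<in>{k', k, Suc k}. real (leaf_step_count n l k) / real (Suc n) * pmf (leaf_count n) l)"
    unfolding pmf_leaf_count_Suc_integral
    by (rule integral_measure_pmf_real) (auto simp: leaf_step_count_def Suc)
  then show ?thesis
    by (simp add: leaf_step_count_def Suc add_divide_distrib algebra_simps)
qed

definition neg_exp_partial :: "nat \<Rightarrow> real" where
  "neg_exp_partial m = (\<Sum>i<m. (-1) ^ i / fact i)"

lemma neg_exp_partial_Suc_Suc:
  "real (Suc j) * neg_exp_partial (Suc (Suc j)) = neg_exp_partial j + real j * neg_exp_partial (Suc j)"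
proof -
  define a where "a = (-1::real) ^ j / fact j"
  have "neg_exp_partial (Suc j) = neg_exp_partial j + a"
    by (simp add: neg_exp_partial_def a_def)
  moreover have "neg_exp_partial (Suc (Suc j)) = neg_exp_partial j + a - a / real (Suc j)"
    by (simp add: neg_exp_partial_def a_def divide_simps)
  ultimately show ?thesis
    by (simp add: field_simps)
qed

lemma neg_exp_partial_tendsto: "neg_exp_partial \<longlonglongrightarrow> exp (-1)"
proof -
  have "(\<lambda>i. (-1::real) ^ i / fact i) sums exp (-1)"
    using exp_converges[of "-1::real"] by (simp add: divide_inverse mult.commute)
  then show ?thesis
    unfolding sums_def neg_exp_partial_def[abs_def] .
qed

lemma neg_exp_partial_leaf_recurrence:
  "real k * neg_exp_partial (Suc (Suc n) - k) + neg_exp_partial (n - k)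
     + real (n - k) * neg_exp_partial (Suc n - k)
   = real (Suc n) * neg_exp_partial (Suc (Suc n) - k)"
proof (cases "k \<le> n")
  case True
  then obtain j where n: "n = k + j"
    using le_Suc_ex by blast
  then have "Suc (Suc n) - k = Suc (Suc j)" "n - k = j" "Suc n - k = Suc j"
    by simp_all
  then show ?thesis
    using neg_exp_partial_Suc_Suc[of j] n by (simp add: algebra_simps)
next
  case False
  then show ?thesis
    by (cases "k = Suc n") (simp_all add: neg_exp_partial_def)
qed

lemma pmf_leaf_count: "pmf (leaf_count n) k = neg_exp_partial (Suc n - k) / fact k"
proof (induction n arbitrary: k)
  case 0
  have "leaf_count 0 = return_pmf 0"
    by (simp add: leaf_count_def leaves_def)
  then show ?case
    by (cases k) (simp_all add: neg_exp_partial_def)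
next
  case (Suc n)
  have previous_leaf: "(if k = 0 then 0 else neg_exp_partial (Suc n - (k - 1)) / fact (k - 1)) =
      real k * neg_exp_partial (Suc (Suc n) - k) / fact k"
    by (cases k) simp_all
  have next_leaf: "real (Suc k) * (neg_exp_partial (Suc n - Suc k) / fact (Suc k)) =
      neg_exp_partial (n - k) / fact k"
    by simp
  have "pmf (leaf_count (Suc n)) k =
      (real k * neg_exp_partial (Suc (Suc n) - k) + neg_exp_partial (n - k)
       + real (n - k) * neg_exp_partial (Suc n - k)) / fact k / real (Suc n)"
    unfolding pmf_leaf_count_Suc Suc.IH previous_leaf next_leaf by (simp add: add_divide_distrib)
  then show ?case
    unfolding neg_exp_partial_leaf_recurrence by simp
qed

theorem mainTheorem12:
  fixes k :: nat
  shows "(\<lambda>N. measure_pmf.prob (RRH N) {es. leaves N es = k}) \<longlonglongrightarrow> exp (-1) / fact k"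
proof (rule Lim_transform_eventually)
  show "(\<lambda>N. neg_exp_partial (N - k) / fact k) \<longlonglongrightarrow> exp (-1) / fact k"
    using filterlim_compose[OF neg_exp_partial_tendsto filterlim_minus_const_nat_at_top]
    by (intro tendsto_divide) simp_all
  show "\<forall>\<^sub>F N in sequentially.
      neg_exp_partial (N - k) / fact k = measure_pmf.prob (RRH N) {es. leaves N es = k}"
  proof (rule eventually_sequentiallyI)
    fix N :: nat
    assume "1 \<le> N"
    then show "neg_exp_partial (N - k) / fact k = measure_pmf.prob (RRH N) {es. leaves N es = k}"
      using pmf_leaf_count[of "N - 1" k] by (simp add: RRH_def leaf_count_def pmf_map vimage_def)
  qed
qed

end
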